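(* Let $d\ge 2$ and assume that for every positive integer $d'<d$, every simple $d'$-polytope with $2d'$ facets has (graph) diameter at most $d'$. Let $D$ be a Dantzig figure of dimension $d$ with distinguished vertices $x,y$, and suppose every facet of $D$ has at most $2d-2$ facets of its own (i.e. at most $2d-2$ of the $(d-2)$-faces of $D$ are contained in it). Then the distance between $x$ and $y$ in the edge-vertex graph of $D$ is at most $d$.
   Context: A Dantzig figure of dimension $d$ is a simple $d$-polytope with exactly $2d$ facets together with two vertices $x,y$ that lie on no common facet. A $d$-polytope is simple if every vertex lies in exactly $d$ facets. The diameter of a polytope is the maximum over pairs of vertices of the shortest-path distance in its edge-vertex graph (vertices and edges of the polytope). *)

theory Defs
  imports "HOL-Analysis.Analysis"
begin

definition poly_adj :: "'a::euclidean_space set \<Rightarrow> 'a \<Rightarrow> 'a \<Rightarrow> bool" where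
  "poly_adj P u v \<longleftrightarrow> u \<noteq> v \<and> u extreme_point_of P \<and> v extreme_point_of P
      \<and> closed_segment u v edge_of P"

definition poly_path :: "'a::euclidean_space set \<Rightarrow> 'a list \<Rightarrow> bool" where
  "poly_path P xs \<longleftrightarrow> xs \<noteq> [] \<and> (\<forall>z\<in>set xs. z extreme_point_of P)
      \<and> (\<forall>i. Suc i < length xs \<longrightarrow> poly_adj P (xs ! i) (xs ! Suc i))"

definition poly_dist :: "'a::euclidean_space set \<Rightarrow> 'a \<Rightarrow> 'a \<Rightarrow> nat" where
  "poly_dist P u v = (LEAST n. \<exists>xs. poly_path P xs \<and> hd xs = u \<and> last xs = v \<and> length xs = Suc n)"

definition poly_diameter :: "'a::euclidean_space set \<Rightarrow> nat" where
  "poly_diameter P = Sup {poly_dist P u v | u v. u extreme_point_of P \<and> v extreme_point_of P}"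

definition simple_polytope :: "'a::euclidean_space set \<Rightarrow> nat \<Rightarrow> bool" where
  "simple_polytope P d \<longleftrightarrow> polytope P \<and> aff_dim P = int d
      \<and> (\<forall>v. v extreme_point_of P \<longrightarrow> card {F. F facet_of P \<and> v \<in> F} = d)"

definition dantzig_figure :: "'a::euclidean_space set \<Rightarrow> nat \<Rightarrow> 'a \<Rightarrow> 'a \<Rightarrow> bool" where
  "dantzig_figure P d x y \<longleftrightarrow> simple_polytope P d \<and> card {F. F facet_of P} = 2 * d
      \<and> x extreme_point_of P \<and> y extreme_point_of P
      \<and> \<not> (\<exists>F. F facet_of P \<and> x \<in> F \<and> y \<in> F)"

end

theory Submission
  imports Defs
begin

text \<open>
  Each facet of the Dantzig figure D contains exactly one of x and y: x and y lie on d facets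
  each, none shared, and there are only 2d. So if y' is a neighbour of y and H a facet through
  y' avoiding y, then x lies on H. The facet H is a simple (d-1)-polytope with at most 2(d-1)
  facets, and such polytopes have diameter at most their dimension k < d: with exactly 2k
  facets this is the hypothesis, with fewer some facet contains both vertices (each lies on k
  facets) and one descends to that facet. This gives a walk x \<leadsto> y' of length at most d - 1
  inside H, and the edge y' y completes it.

  Since poly_dist is a LEAST over paths, a diameter bound only yields an actual walk
  once the graph is known to be connected; connectivity follows by induction on the dimension,
  because the facets reachable from a vertex cover the connected relative boundary.
\<close>

lemma poly_adj_sym: "poly_adj P u v \<Longrightarrow> poly_adj P v u"
  by (auto simp: poly_adj_def closed_segment_commute)

lemma poly_adj_face_of:
  "F face_of P \<Longrightarrow> poly_adj F u v \<Longrightarrow> poly_adj P u v"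
  by (auto simp: poly_adj_def edge_of_def extreme_point_of_face intro: face_of_trans)

lemma relpowp_poly_adj_face_of:
  assumes "F face_of P" "(poly_adj F ^^ n) u v"
  shows "(poly_adj P ^^ n) u v"
  using assms(2) by (rule relpowp_mono[rotated]) (rule poly_adj_face_of[OF assms(1)])

lemma poly_path_iff_relpowp:
  "(\<exists>xs. poly_path P xs \<and> hd xs = u \<and> last xs = v \<and> length xs = Suc n)
     \<longleftrightarrow> u extreme_point_of P \<and> (poly_adj P ^^ n) u v"
proof
  assume "\<exists>xs. poly_path P xs \<and> hd xs = u \<and> last xs = v \<and> length xs = Suc n"
  then obtain xs where xs: "poly_path P xs" "hd xs = u" "last xs = v" "length xs = Suc n"
    by blast
  have "xs \<noteq> []"
    using xs(4) by auto
  then have "xs ! 0 = u" "xs ! n = v"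
    using xs by (simp_all add: hd_conv_nth last_conv_nth)
  then have "(poly_adj P ^^ n) u v"
    using xs unfolding relpowp_fun_conv by (intro exI[of _ "(!) xs"]) (auto simp: poly_path_def)
  moreover have "u extreme_point_of P"
    using xs by (auto simp: poly_path_def)
  ultimately show "u extreme_point_of P \<and> (poly_adj P ^^ n) u v"
    by blast
next
  assume "u extreme_point_of P \<and> (poly_adj P ^^ n) u v"
  then obtain f where u: "u extreme_point_of P" and f: "f 0 = u" "f n = v"
    and adj: "\<And>i. i < n \<Longrightarrow> poly_adj P (f i) (f (Suc i))"
    by (auto simp: relpowp_fun_conv)
  have "f i extreme_point_of P" if "i \<le> n" for i
  proof (cases i)
    case 0
    then show ?thesis using u f by simp
  next
    case (Suc j)
    then show ?thesis using that adj[of j] by (simp add: poly_adj_def)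
  qed
  then have "poly_path P (map f [0..<Suc n])"
    using adj by (auto simp: poly_path_def simp del: upt_Suc)
  then show "\<exists>xs. poly_path P xs \<and> hd xs = u \<and> last xs = v \<and> length xs = Suc n"
    using f by (intro exI[of _ "map f [0..<Suc n]"]) (simp add: hd_map last_map del: upt_Suc)
qed

lemma poly_dist_le:
  "u extreme_point_of P \<Longrightarrow> (poly_adj P ^^ n) u v \<Longrightarrow> poly_dist P u v \<le> n"
  unfolding poly_dist_def by (rule Least_le) (simp add: poly_path_iff_relpowp)

lemma relpowp_poly_dist:
  assumes "u extreme_point_of P" "(poly_adj P)\<^sup>*\<^sup>* u v"
  shows "(poly_adj P ^^ poly_dist P u v) u v"
proof -
  have "\<exists>n xs. poly_path P xs \<and> hd xs = u \<and> last xs = v \<and> length xs = Suc n"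
    using assms by (simp add: poly_path_iff_relpowp rtranclp_power)
  then show ?thesis
    unfolding poly_dist_def by (rule LeastI2_ex) (simp add: poly_path_iff_relpowp)
qed

lemma poly_dist_le_poly_diameter:
  assumes "polytope P" "u extreme_point_of P" "v extreme_point_of P"
  shows "poly_dist P u v \<le> poly_diameter P"
proof -
  let ?V = "{w. w extreme_point_of P}"
  have "finite ?V"
    using assms(1) finite_polyhedron_extreme_points polytope_imp_polyhedron by blast
  then have "finite ((\<lambda>(a, b). poly_dist P a b) ` (?V \<times> ?V))"
    by blast
  moreover have "{poly_dist P a b |a b. a extreme_point_of P \<and> b extreme_point_of P}
      = (\<lambda>(a, b). poly_dist P a b) ` (?V \<times> ?V)"
    by auto
  ultimately show ?thesis
    unfolding poly_diameter_def using assms by (intro le_cSup_finite) auto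
qed

lemma polytope_aff_dim_1_eq_segment:
  fixes S :: "'a::euclidean_space set"
  assumes "polytope S" "aff_dim S = 1" "u \<noteq> v"
    and "u extreme_point_of S" "v extreme_point_of S"
  shows "S = closed_segment u v"
proof -
  have "S \<noteq> {}" "collinear S"
    using assms(2) by (auto simp: collinear_aff_dim)
  then obtain a b where S: "S = closed_segment a b"
    using assms(1) compact_convex_collinear_segment polytope_imp_compact polytope_imp_convex
    by metis
  then have "u \<in> {a, b}" "v \<in> {a, b}"
    using assms(4,5) by (auto simp: extreme_point_of_segment)
  then show ?thesis
    using S assms(3) by (auto simp: closed_segment_commute)
qed

lemma polytope_vertex_in_facet:
  fixes P :: "'a::euclidean_space set"
  assumes "polytope P" "0 < aff_dim P" "v extreme_point_of P"
  obtains F where "F facet_of P" "v \<in> F"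
proof -
  have "{v} face_of P" "{v} \<noteq> P"
    using assms(2,3) by (auto simp: face_of_singleton)
  then show ?thesis
    using face_of_polyhedron_subset_facet[of P "{v}"] assms(1) polytope_imp_polyhedron that
    by blast
qed

lemma polytope_facet:
  "polytope P \<Longrightarrow> F facet_of P \<Longrightarrow> polytope F"
  using face_of_polytope_polytope facet_of_imp_face_of by blast

lemma aff_dim_facet:
  "F facet_of P \<Longrightarrow> aff_dim F = aff_dim P - 1"
  by (simp add: facet_of_def)

lemma extreme_point_of_facet:
  "F facet_of P \<Longrightarrow> v extreme_point_of F \<longleftrightarrow> v extreme_point_of P \<and> v \<in> F"
  by (simp add: extreme_point_of_face facet_of_imp_face_of)

lemma polytope_vertex_in_edge:
  fixes P :: "'a::euclidean_space set"
  assumes "polytope P" "0 < aff_dim P" "v extreme_point_of P"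
  obtains e where "e edge_of P" "v \<in> e"
  using assms
proof (induction "nat (aff_dim P)" arbitrary: P thesis rule: less_induct)
  case less
  show ?case
  proof (cases "aff_dim P = 1")
    case True
    have "v \<in> P"
      using less.prems(4) extreme_point_of_def by blast
    then show ?thesis
      using less.prems(1)[of P] less.prems(2) True
      by (simp add: edge_of_def face_of_refl polytope_imp_convex)
  next
    case False
    obtain F where F: "F facet_of P" "v \<in> F"
      using polytope_vertex_in_facet less.prems by blast
    have "polytope F" "0 < aff_dim F" "v extreme_point_of F"
      using F less.prems False polytope_facet aff_dim_facet[OF F(1)] extreme_point_of_facet[OF F(1)]
      by auto
    moreover have "nat (aff_dim F) < nat (aff_dim P)"
      using aff_dim_facet[OF F(1)] \<open>0 < aff_dim F\<close> by simp
    ultimately obtain e where "e edge_of F" "v \<in> e"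
      using less.hyps by blast
    then show ?thesis
      using less.prems(1) F(1) face_of_trans[OF _ facet_of_imp_face_of]
      by (auto simp: edge_of_def)
  qed
qed

lemma polytope_vertex_has_neighbour:
  fixes P :: "'a::euclidean_space set"
  assumes "polytope P" "0 < aff_dim P" "v extreme_point_of P"
  obtains w where "poly_adj P v w"
proof -
  obtain e where e: "e edge_of P" "v \<in> e"
    using polytope_vertex_in_edge assms by blast
  then have "e face_of P" "aff_dim e = 1"
    by (auto simp: edge_of_def)
  moreover have "polytope e"
    using assms(1) \<open>e face_of P\<close> face_of_polytope_polytope by blast
  ultimately obtain a b where ab: "e = closed_segment a b"
    using compact_convex_collinear_segment polytope_imp_compact polytope_imp_convex
      collinear_aff_dim[of e] e(2)
    by (metis empty_iff order.refl)
  have "a \<noteq> b"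
    using \<open>aff_dim e = 1\<close> ab by auto
  have ext: "w extreme_point_of P \<longleftrightarrow> w = a \<or> w = b" if "w \<in> e" for w
    using extreme_point_of_face[OF \<open>e face_of P\<close>, of w] that
    by (simp add: ab extreme_point_of_segment)
  have "v = a \<or> v = b" "a extreme_point_of P" "b extreme_point_of P"
    using ext[of v] ext[of a] ext[of b] e(2) ab assms(3) by auto
  then show ?thesis
    using that[of b] that[of a] e(1) ab \<open>a \<noteq> b\<close>
    by (auto simp: poly_adj_def closed_segment_commute)
qed

lemma finite_facets_of_polytope:
  "polytope P \<Longrightarrow> finite {F. F facet_of P \<and> Q F}"
  by (rule finite_subset[OF _ finite_polyhedron_facets[OF polytope_imp_polyhedron]]) auto

lemma facet_of_face_eq_Int_facet:
  fixes P :: "'a::euclidean_space set"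
  assumes "polytope P" "F face_of P" "E facet_of F"
  obtains H where "H facet_of P" "H \<noteq> F" "E = F \<inter> H"
proof -
  have EP: "E face_of P" and "E \<subseteq> F" and dE: "aff_dim E = aff_dim F - 1"
    using assms face_of_trans facet_of_imp_face_of facet_of_imp_subset aff_dim_facet by blast+
  have "E \<noteq> {}" "E \<noteq> P"
    using assms(3) dE aff_dim_subset[OF face_of_imp_subset[OF assms(2)]]
    by (auto simp: facet_of_def)
  then have E_Inter: "\<Inter>{H. H facet_of P \<and> E \<subseteq> H} = E"
    by (rule sym[OF face_of_polyhedron[OF polytope_imp_polyhedron[OF assms(1)] EP]])
  have "\<not> F \<subseteq> E"
    using \<open>E \<subseteq> F\<close> dE by auto
  then have "\<not> F \<subseteq> \<Inter>{H. H facet_of P \<and> E \<subseteq> H}"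
    by (simp add: E_Inter)
  then obtain H where H: "H facet_of P" "E \<subseteq> H" "\<not> F \<subseteq> H"
    by blast
  have FH: "(F \<inter> H) face_of F"
    using face_of_Int[OF assms(2) facet_of_imp_face_of[OF H(1)]] assms(2)
    by (meson face_of_imp_subset face_of_subset inf_le1)
  have "aff_dim (F \<inter> H) < aff_dim F"
    using face_of_aff_dim_lt[OF face_of_imp_convex[OF assms(2)] FH] H(3) by blast
  moreover have "E face_of (F \<inter> H)"
    using face_of_subset[OF facet_of_imp_face_of[OF assms(3)]] \<open>E \<subseteq> F\<close> H(2) FH
      face_of_imp_subset by blast
  ultimately have "E = F \<inter> H"
    using face_of_aff_dim_lt[OF face_of_imp_convex[OF FH], of E] dE by linarith
  then show ?thesis
    using that H by blast
qed

lemma card_facets_of_facet_less: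
  fixes P :: "'a::euclidean_space set"
  assumes "polytope P" "G facet_of P" "S \<subseteq> G"
  shows "card {E. E facet_of G \<and> S \<subseteq> E} < card {H. H facet_of P \<and> S \<subseteq> H}"
proof -
  let ?H = "{H. H facet_of P \<and> S \<subseteq> H}"
  have "{E. E facet_of G \<and> S \<subseteq> E} \<subseteq> (\<inter>) G ` (?H - {G})"
  proof
    fix E assume E: "E \<in> {E. E facet_of G \<and> S \<subseteq> E}"
    then obtain H where "H facet_of P" "H \<noteq> G" "E = G \<inter> H"
      using facet_of_face_eq_Int_facet[OF assms(1) facet_of_imp_face_of[OF assms(2)]] by blast
    moreover have "S \<subseteq> H"
      using E \<open>E = G \<inter> H\<close> by blast
    ultimately show "E \<in> (\<inter>) G ` (?H - {G})"
      by (intro rev_image_eqI[of H]) auto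
  qed
  then have "card {E. E facet_of G \<and> S \<subseteq> E} \<le> card ((\<inter>) G ` (?H - {G}))"
    using finite_facets_of_polytope[OF assms(1)] by (intro card_mono finite_imageI finite_Diff)
  also have "\<dots> \<le> card (?H - {G})"
    using finite_facets_of_polytope[OF assms(1)] by (intro card_image_le finite_Diff)
  also have "\<dots> < card ?H"
    using assms(2,3) by (intro card_Diff1_less finite_facets_of_polytope[OF assms(1)]) simp
  finally show ?thesis .
qed

lemma card_vertex_facets_ge:
  fixes P :: "'a::euclidean_space set"
  assumes "polytope P" "v extreme_point_of P"
  shows "nat (aff_dim P) \<le> card {F. F facet_of P \<and> v \<in> F}"
  using assms
proof (induction "nat (aff_dim P)" arbitrary: P rule: less_induct)
  case less
  show ?case
  proof (cases "aff_dim P \<le> 0")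
    case True
    then show ?thesis by simp
  next
    case False
    then obtain G where G: "G facet_of P" "v \<in> G"
      using polytope_vertex_in_facet less.prems by force
    have "polytope G" "v extreme_point_of G" "nat (aff_dim G) < nat (aff_dim P)"
      using G less.prems False polytope_facet extreme_point_of_facet[OF G(1)] aff_dim_facet[OF G(1)]
      by auto
    then have "nat (aff_dim G) \<le> card {E. E facet_of G \<and> v \<in> E}"
      using less.hyps by blast
    also have "\<dots> < card {F. F facet_of P \<and> v \<in> F}"
      using card_facets_of_facet_less[OF less.prems(1) G(1), of "{v}"] G(2) by simp
    finally show ?thesis
      using aff_dim_facet[OF G(1)] by linarith
  qed
qed

lemma simple_polytope_facet:
  fixes P :: "'a::euclidean_space set"
  assumes "simple_polytope P k" "G facet_of P"
  shows "simple_polytope G (k - 1)"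
proof -
  have pP: "polytope P" and dP: "aff_dim P = int k"
    and sP: "\<And>v. v extreme_point_of P \<Longrightarrow> card {F. F facet_of P \<and> v \<in> F} = k"
    using assms(1) by (auto simp: simple_polytope_def)
  have pG: "polytope G"
    using pP assms(2) polytope_facet by blast
  have "aff_dim G \<ge> 0"
    using assms(2) aff_dim_geq[of G] aff_dim_empty[of G] by (auto simp: facet_of_def)
  then have dG: "aff_dim G = int (k - 1)"
    using aff_dim_facet[OF assms(2)] dP by simp
  have "card {E. E facet_of G \<and> v \<in> E} = k - 1" if v: "v extreme_point_of G" for v
  proof -
    have "v extreme_point_of P" "v \<in> G"
      using v extreme_point_of_facet[OF assms(2)] by auto
    then have "card {E. E facet_of G \<and> v \<in> E} < k"
      using card_facets_of_facet_less[OF pP assms(2), of "{v}"] sP by simp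
    moreover have "k - 1 \<le> card {E. E facet_of G \<and> v \<in> E}"
      using card_vertex_facets_ge[OF pG v] dG by simp
    ultimately show ?thesis by linarith
  qed
  then show ?thesis
    using pG dG by (simp add: simple_polytope_def)
qed

lemma card_facets_containing_either:
  fixes P :: "'a::euclidean_space set"
  assumes "simple_polytope P k" "u extreme_point_of P" "v extreme_point_of P"
    and "\<nexists>F. F facet_of P \<and> u \<in> F \<and> v \<in> F"
  shows "card {F. F facet_of P \<and> (u \<in> F \<or> v \<in> F)} = 2 * k"
proof -
  let ?U = "{F. F facet_of P \<and> u \<in> F}" and ?V = "{F. F facet_of P \<and> v \<in> F}"
  have "{F. F facet_of P \<and> (u \<in> F \<or> v \<in> F)} = ?U \<union> ?V"
    by blast
  moreover have "card (?U \<union> ?V) = card ?U + card ?V"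
    using assms(1,4) finite_facets_of_polytope
    by (intro card_Un_disjoint) (auto simp: simple_polytope_def)
  ultimately show ?thesis
    using assms(1-3) by (simp add: simple_polytope_def)
qed

lemma simple_polytope_separating_facet:
  fixes P :: "'a::euclidean_space set"
  assumes "simple_polytope P k" "v extreme_point_of P" "w extreme_point_of P" "v \<noteq> w"
  obtains H where "H facet_of P" "w \<in> H" "v \<notin> H"
proof -
  have pP: "polytope P"
    using assms(1) by (simp add: simple_polytope_def)
  have "{v} face_of P" "{v} \<noteq> P"
    using assms(2-4) by (auto simp: face_of_singleton extreme_point_of_def)
  then have v_Inter: "{v} = \<Inter>{F. F facet_of P \<and> {v} \<subseteq> F}"
    using face_of_polyhedron pP polytope_imp_polyhedron by blast
  have "\<not> {F. F facet_of P \<and> w \<in> F} \<subseteq> {F. F facet_of P \<and> v \<in> F}"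
  proof
    assume sub: "{F. F facet_of P \<and> w \<in> F} \<subseteq> {F. F facet_of P \<and> v \<in> F}"
    moreover have "card {F. F facet_of P \<and> w \<in> F} = card {F. F facet_of P \<and> v \<in> F}"
      using assms(1-3) by (simp add: simple_polytope_def)
    ultimately have "{F. F facet_of P \<and> w \<in> F} = {F. F facet_of P \<and> v \<in> F}"
      by (intro card_subset_eq finite_facets_of_polytope[OF pP])
    then have "w \<in> \<Inter>{F. F facet_of P \<and> {v} \<subseteq> F}"
      by blast
    then have "w \<in> {v}"
      by (simp only: v_Inter[symmetric])
    then show False
      using assms(4) by simp
  qed
  then show ?thesis
    using that by blast
qed

lemma connected_Union_saturated_subfamily:
  assumes "connected (\<Union>\<A>)" "finite \<A>" "\<And>A. A \<in> \<A> \<Longrightarrow> closed A"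
    and "\<R> \<subseteq> \<A>" "\<Union>\<R> \<noteq> {}"
    and saturated: "\<And>A B. A \<in> \<A> \<Longrightarrow> B \<in> \<R> \<Longrightarrow> A \<inter> B \<noteq> {} \<Longrightarrow> A \<in> \<R>"
  shows "\<Union>\<R> = \<Union>\<A>"
proof -
  have "closed (\<Union>\<R>)" "closed (\<Union>(\<A> - \<R>))"
    using assms(2-4) by (auto intro!: closed_Union intro: finite_subset)
  moreover have "\<Union>\<R> \<inter> \<Union>(\<A> - \<R>) = {}"
    using saturated by blast
  moreover have "\<Union>\<A> = \<Union>\<R> \<union> \<Union>(\<A> - \<R>)"
    using assms(4) by blast
  ultimately have "\<Union>(\<A> - \<R>) = {}"
    using assms(1,5) unfolding connected_closed by blast
  then show ?thesis
    using assms(4) by blast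
qed

lemma facets_Int_common_vertex:
  fixes P :: "'a::euclidean_space set"
  assumes "polytope P" "A facet_of P" "B facet_of P" "A \<inter> B \<noteq> {}"
  obtains w where "w extreme_point_of P" "w \<in> A" "w \<in> B"
proof -
  have AB: "(A \<inter> B) face_of P"
    using assms(2,3) face_of_Int facet_of_imp_face_of by blast
  then have "polytope (A \<inter> B)"
    using assms(1) face_of_polytope_polytope by blast
  then obtain w where "w extreme_point_of (A \<inter> B)"
    using assms(4) extreme_point_exists_convex polytope_imp_compact polytope_imp_convex by blast
  then show ?thesis
    using that extreme_point_of_face[OF AB] by blast
qed

lemma connected_Union_facets:
  fixes P :: "'a::euclidean_space set"
  assumes "polytope P" "aff_dim P \<noteq> 1"
  shows "connected (\<Union>{F. F facet_of P})"
proof -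
  have "connected (rel_frontier P)"
    using assms by (intro connected_sphere_gen polytope_imp_convex polytope_imp_bounded)
  then show ?thesis
    by (simp add: rel_frontier_of_polyhedron polytope_imp_polyhedron assms(1))
qed

lemma poly_adj_connected_if_facets_connected:
  fixes P :: "'a::euclidean_space set"
  assumes "polytope P" "2 \<le> aff_dim P"
    and facets: "\<And>F w z. F facet_of P \<Longrightarrow> w extreme_point_of F \<Longrightarrow> z extreme_point_of F
                   \<Longrightarrow> (poly_adj F)\<^sup>*\<^sup>* w z"
    and "u extreme_point_of P" "v extreme_point_of P"
  shows "(poly_adj P)\<^sup>*\<^sup>* u v"
proof -
  have in_facet: "(poly_adj P)\<^sup>*\<^sup>* w z"
    if F: "F facet_of P" and "w extreme_point_of P" "w \<in> F" "z extreme_point_of P" "z \<in> F"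
    for F w z
  proof -
    have "(poly_adj F)\<^sup>*\<^sup>* w z"
      using facets[OF F] that extreme_point_of_facet[OF F] by blast
    moreover have "poly_adj F \<le> poly_adj P"
      using poly_adj_face_of[OF facet_of_imp_face_of[OF F]] by blast
    ultimately show ?thesis
      using rtranclp_mono by blast
  qed
  define \<R> where "\<R> = {F. F facet_of P \<and> (\<exists>w\<in>F. w extreme_point_of P \<and> (poly_adj P)\<^sup>*\<^sup>* u w)}"
  have "\<Union>\<R> = \<Union>{F. F facet_of P}"
  proof (rule connected_Union_saturated_subfamily)
    show "connected (\<Union>{F. F facet_of P})"
      using assms(1,2) by (intro connected_Union_facets) auto
    show "finite {F. F facet_of P}"
      using finite_facets_of_polytope[OF assms(1), of "\<lambda>_. True"] by simp
    show "closed F" if "F \<in> {F. F facet_of P}" for F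
      using that assms(1) polytope_facet polytope_imp_closed by blast
    show "\<R> \<subseteq> {F. F facet_of P}"
      by (auto simp: \<R>_def)
    obtain G where "G facet_of P" "u \<in> G"
      using polytope_vertex_in_facet assms(1,2,4) by force
    then show "\<Union>\<R> \<noteq> {}"
      using assms(4) by (auto simp: \<R>_def)
    show "A \<in> \<R>" if A: "A \<in> {F. F facet_of P}" and B: "B \<in> \<R>" and AB: "A \<inter> B \<noteq> {}"
      for A B
    proof -
      obtain w0 where w0: "w0 \<in> B" "w0 extreme_point_of P" "(poly_adj P)\<^sup>*\<^sup>* u w0"
        using B by (auto simp: \<R>_def)
      have "A facet_of P" "B facet_of P"
        using A B by (auto simp: \<R>_def)
      then obtain w where w: "w extreme_point_of P" "w \<in> A" "w \<in> B"
        using facets_Int_common_vertex[OF assms(1)] AB by metis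
      have "(poly_adj P)\<^sup>*\<^sup>* w0 w"
        using in_facet[OF \<open>B facet_of P\<close>] w0 w by blast
      then have "(poly_adj P)\<^sup>*\<^sup>* u w"
        using w0(3) by (rule rtranclp_trans[rotated])
      then show ?thesis
        using \<open>A facet_of P\<close> w unfolding \<R>_def by blast
    qed
  qed
  moreover obtain G where "G facet_of P" "v \<in> G"
    using polytope_vertex_in_facet assms(1,2,5) by force
  ultimately have "v \<in> \<Union>\<R>"
    by blast
  then obtain B w0 where "B facet_of P" "v \<in> B" "w0 \<in> B" "w0 extreme_point_of P"
    "(poly_adj P)\<^sup>*\<^sup>* u w0"
    unfolding \<R>_def by blast
  moreover have "(poly_adj P)\<^sup>*\<^sup>* w0 v"
    using in_facet calculation assms(5) by blast
  ultimately show ?thesis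
    by (meson rtranclp_trans)
qed

lemma polytope_poly_adj_connected:
  fixes P :: "'a::euclidean_space set"
  assumes "polytope P" "u extreme_point_of P" "v extreme_point_of P"
  shows "(poly_adj P)\<^sup>*\<^sup>* u v"
  using assms
proof (induction "nat (aff_dim P)" arbitrary: P u v rule: less_induct)
  case less
  have "u \<in> P" "v \<in> P"
    using less.prems by (auto simp: extreme_point_of_def)
  then have "aff_dim P \<ge> 0"
    using aff_dim_negative_iff[of P] by (meson empty_iff not_le)
  then consider "u = v" | "aff_dim P = 0" | "aff_dim P = 1" "u \<noteq> v" | "aff_dim P \<ge> 2"
    by linarith
  then show ?case
  proof cases
    case 2
    then obtain a where "P = {a}"
      using aff_dim_eq_0 by blast
    then show ?thesis
      using \<open>u \<in> P\<close> \<open>v \<in> P\<close> by simp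
  next
    case 3
    then have "P = closed_segment u v"
      using less.prems by (intro polytope_aff_dim_1_eq_segment)
    then have "poly_adj P u v"
      using less.prems 3 by (simp add: poly_adj_def edge_of_def face_of_refl polytope_imp_convex)
    then show ?thesis by simp
  next
    case 4
    show ?thesis
    proof (rule poly_adj_connected_if_facets_connected[OF less.prems(1) 4 _ less.prems(2,3)])
      fix F w z
      assume "F facet_of P" "w extreme_point_of F" "z extreme_point_of F"
      moreover have "nat (aff_dim F) < nat (aff_dim P)"
        using aff_dim_facet[OF \<open>F facet_of P\<close>] 4 by simp
      ultimately show "(poly_adj F)\<^sup>*\<^sup>* w z"
        using less.hyps less.prems(1) polytope_facet by blast
    qed
  qed simp
qed

lemma dantzig_figure_facet_contains_either:
  fixes D :: "'a::euclidean_space set"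
  assumes "dantzig_figure D d x y" "F facet_of D"
  shows "x \<in> F \<or> y \<in> F"
proof -
  have sD: "simple_polytope D d" and xD: "x extreme_point_of D" and yD: "y extreme_point_of D"
    and no_common: "\<nexists>F. F facet_of D \<and> x \<in> F \<and> y \<in> F"
    and card_D: "card {F. F facet_of D} = 2 * d"
    using assms(1) by (auto simp: dantzig_figure_def)
  have "{F. F facet_of D \<and> (x \<in> F \<or> y \<in> F)} = {F. F facet_of D}"
    using card_facets_containing_either[OF sD xD yD no_common] card_D sD
      finite_facets_of_polytope[of D "\<lambda>_. True"]
    by (intro card_subset_eq) (auto simp: simple_polytope_def)
  then show ?thesis
    using assms(2) by blast
qed

lemma simple_polytope_common_facet:
  fixes P :: "'a::euclidean_space set"
  assumes "simple_polytope P k" "card {F. F facet_of P} < 2 * k"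
    and "u extreme_point_of P" "v extreme_point_of P"
  shows "\<exists>G. G facet_of P \<and> u \<in> G \<and> v \<in> G"
proof (rule ccontr)
  assume "\<nexists>G. G facet_of P \<and> u \<in> G \<and> v \<in> G"
  then have "2 * k = card {F. F facet_of P \<and> (u \<in> F \<or> v \<in> F)}"
    using card_facets_containing_either[OF assms(1,3,4)] by simp
  also have "\<dots> \<le> card {F. F facet_of P}"
    using assms(1) finite_facets_of_polytope[of P "\<lambda>_. True"]
    by (intro card_mono) (auto simp: simple_polytope_def)
  finally show False
    using assms(2) by simp
qed

lemma simple_polytope_walk_le_dim:
  fixes Q :: "'a::euclidean_space set"
  assumes diameter_hyp: "\<forall>d' (Q :: 'a set). 0 < d' \<and> d' < d \<and> simple_polytope Q d'
           \<and> card {F. F facet_of Q} = 2 * d' \<longrightarrow> poly_diameter Q \<le> d'"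
    and "simple_polytope Q k" "k < d" "card {F. F facet_of Q} \<le> 2 * k"
    and "u extreme_point_of Q" "v extreme_point_of Q"
  shows "\<exists>n\<le>k. (poly_adj Q ^^ n) u v"
  using assms(2-)
proof (induction k arbitrary: Q u v)
  case 0
  then obtain a where "Q = {a}"
    by (auto simp: simple_polytope_def aff_dim_eq_0)
  then show ?case
    using "0.prems"(4,5) by auto
next
  case (Suc k)
  have pQ: "polytope Q"
    using Suc.prems(1) by (simp add: simple_polytope_def)
  show ?case
  proof (cases "card {F. F facet_of Q} = 2 * Suc k")
    case True
    then have "poly_diameter Q \<le> Suc k"
      using diameter_hyp Suc.prems(1,2) by blast
    moreover have "poly_dist Q u v \<le> poly_diameter Q"
      using poly_dist_le_poly_diameter pQ Suc.prems(4,5) by blast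
    moreover have "(poly_adj Q ^^ poly_dist Q u v) u v"
      using relpowp_poly_dist polytope_poly_adj_connected pQ Suc.prems(4,5) by blast
    ultimately show ?thesis
      by (intro exI[of _ "poly_dist Q u v"]) simp
  next
    case False
    then have "card {F. F facet_of Q} < 2 * Suc k"
      using Suc.prems(3) by simp
    then obtain G where G: "G facet_of Q" "u \<in> G" "v \<in> G"
      using simple_polytope_common_facet Suc.prems(1,4,5) by blast
    have "card {E. E facet_of G} < card {F. F facet_of Q}"
      using card_facets_of_facet_less[OF pQ G(1), of "{}"] by simp
    moreover have "card {F. F facet_of Q} < 2 * k + 2"
      using \<open>card {F. F facet_of Q} < 2 * Suc k\<close> by simp
    ultimately have "card {E. E facet_of G} \<le> 2 * k"
      by linarith
    moreover have "simple_polytope G k"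
      using simple_polytope_facet[OF Suc.prems(1) G(1)] by simp
    moreover have "u extreme_point_of G" "v extreme_point_of G"
      using extreme_point_of_facet[OF G(1)] G Suc.prems(4,5) by blast+
    moreover have "k < d"
      using Suc.prems(2) by simp
    ultimately obtain n where "n \<le> k" "(poly_adj G ^^ n) u v"
      using Suc.IH by blast
    then show ?thesis
      using relpowp_poly_adj_face_of[OF facet_of_imp_face_of[OF G(1)]] le_SucI by blast
  qed
qed

theorem mainTheorem5:
  fixes D :: "'a::euclidean_space set" and d :: nat and x y :: 'a
  assumes "d \<ge> 2"
    and "\<forall>d' (Q :: 'a set). 0 < d' \<and> d' < d \<and> simple_polytope Q d'
           \<and> card {F. F facet_of Q} = 2 * d' \<longrightarrow> poly_diameter Q \<le> d'"
    and "dantzig_figure D d x y"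
    and "\<forall>F. F facet_of D \<longrightarrow> card {G. G facet_of F} \<le> 2 * d - 2"
  shows "poly_dist D x y \<le> d"
proof -
  have sD: "simple_polytope D d" and xD: "x extreme_point_of D" and yD: "y extreme_point_of D"
    using assms(3) by (auto simp: dantzig_figure_def)
  obtain y' where yy': "poly_adj D y y'"
    using polytope_vertex_has_neighbour[of D y] sD yD assms(1) by (auto simp: simple_polytope_def)
  then obtain H where H: "H facet_of D" "y' \<in> H" "y \<notin> H"
    using simple_polytope_separating_facet[OF sD yD] by (auto simp: poly_adj_def)
  then have "x extreme_point_of H" "y' extreme_point_of H"
    using dantzig_figure_facet_contains_either[OF assms(3) H(1)] extreme_point_of_facet[OF H(1)]
      xD yy' by (auto simp: poly_adj_def)
  moreover have "card {F. F facet_of H} \<le> 2 * (d - 1)" "d - 1 < d"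
    using assms(1,4) H(1) by (simp_all add: right_diff_distrib')
  ultimately obtain n where "n \<le> d - 1" "(poly_adj H ^^ n) x y'"
    using simple_polytope_walk_le_dim[OF assms(2) simple_polytope_facet[OF sD H(1)]] by blast
  then have "(poly_adj D ^^ Suc n) x y"
    using relpowp_poly_adj_face_of[OF facet_of_imp_face_of[OF H(1)]] poly_adj_sym[OF yy']
    by (blast intro: relpowp_Suc_I)
  then have "poly_dist D x y \<le> Suc n"
    by (rule poly_dist_le[OF xD])
  then show ?thesis
    using \<open>n \<le> d - 1\<close> assms(1) by linarith
qed

end
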